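(* Let $R$ be a non-degenerate $n$-ary relation on a domain $\mathcal{D}$ with $n\ge2$. Then $\mathrm{ter}(R)\ge n-2$. In particular, every non-degenerate ternary relation is bond irreducible. If moreover $|R|\le|\mathcal{D}|$, then $\mathrm{ter}(R)=n-2$. In particular, $\mathrm{ter}(R)=n-2$ for all such (non-degenerate, $n\ge2$) relations on infinite domains $\mathcal{D}$.
   Context: Relations are attributed: $R\subseteq\mathcal{D}^\Sigma$, $\Sigma$ finite, arity $n=|\Sigma|$; $\pi_\Gamma$ restricts tuples to $\Gamma$; the join of $R_i\subseteq\mathcal{D}^{\Lambda_i}$ is $\{a\in\mathcal{D}^{\cup\Lambda_i}:a|_{\Lambda_i}\in R_i\ \forall i\}$. $R$ is degenerate if there is a partition $\Sigma=\Lambda_1\cup\dots\cup\Lambda_m$ with $m>1$, all $\Lambda_i\neq\emptyset$, and $R^{\Lambda_i}\subseteq\mathcal{D}^{\Lambda_i}$ with $R=\{a:a|_{\Lambda_i}\in R^{\Lambda_i}\ \forall i\}$. Bonds: relations $R_i\subseteq\mathcal{D}^{\Lambda_i}$ are bondable if no attribute lies in three or more $\Lambda_i$; their bond is $\pi_\Gamma[R_1\Join\dots\Join R_m]$, $\Gamma$ the set of attributes lying in exactly one $\Lambda_i$. $R$ is bond reducible if it is a bond of factors $R_i\subseteq\mathcal{D}^{\Lambda_i}$ with $0<|\Lambda_i|<|\Sigma|$, otherwise bond irreducible. A bond is subternaric if all factors have arity $\le3$. The ternarity $\mathrm{ter}(R)$ is the minimal number of factors of arity $3$ over all representations of $R$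 as a subternaric bond (a relation of arity $\le3$ counts as a one-factor bond of itself), and $\infty$ if none exists. *)

theory Defs
  imports "HOL-Library.FuncSet" "HOL-Library.Extended_Nat"
begin

text \<open>Attributes are natural numbers (an infinite supply of attribute names, so that
bonds may use arbitrarily many auxiliary attributes).\<close>

definition tuples :: "nat set \<Rightarrow> (nat \<Rightarrow> 'd) set" where
  "tuples S = PiE S (\<lambda>_. UNIV)"

definition is_rel :: "nat set \<Rightarrow> (nat \<Rightarrow> 'd) set \<Rightarrow> bool" where
  "is_rel S R \<longleftrightarrow> finite S \<and> R \<subseteq> tuples S"

definition proj :: "nat set \<Rightarrow> (nat \<Rightarrow> 'd) set \<Rightarrow> (nat \<Rightarrow> 'd) set" where
  "proj G R = (\<lambda>a. restrict a G) ` R"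

definition join :: "(nat set \<times> (nat \<Rightarrow> 'd) set) list \<Rightarrow> (nat \<Rightarrow> 'd) set" where
  "join Fs = {a \<in> tuples (\<Union>i<length Fs. fst (Fs!i)).
               \<forall>i<length Fs. restrict a (fst (Fs!i)) \<in> snd (Fs!i)}"

definition occ :: "(nat set \<times> (nat \<Rightarrow> 'd) set) list \<Rightarrow> nat \<Rightarrow> nat" where
  "occ Fs x = card {i. i < length Fs \<and> x \<in> fst (Fs!i)}"

definition bondable :: "(nat set \<times> (nat \<Rightarrow> 'd) set) list \<Rightarrow> bool" where
  "bondable Fs \<longleftrightarrow> (\<forall>i<length Fs. is_rel (fst (Fs!i)) (snd (Fs!i))) \<and> (\<forall>x. occ Fs x \<le> 2)"

definition bond_attrs :: "(nat set \<times> (nat \<Rightarrow> 'd) set) list \<Rightarrow> nat set" where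
  "bond_attrs Fs = {x. occ Fs x = 1}"

definition bond :: "(nat set \<times> (nat \<Rightarrow> 'd) set) list \<Rightarrow> (nat \<Rightarrow> 'd) set" where
  "bond Fs = proj (bond_attrs Fs) (join Fs)"

definition is_bond_of :: "nat set \<Rightarrow> (nat \<Rightarrow> 'd) set \<Rightarrow> (nat set \<times> (nat \<Rightarrow> 'd) set) list \<Rightarrow> bool" where
  "is_bond_of S R Fs \<longleftrightarrow> bondable Fs \<and> bond_attrs Fs = S \<and> bond Fs = R"

definition bond_reducible :: "nat set \<Rightarrow> (nat \<Rightarrow> 'd) set \<Rightarrow> bool" where
  "bond_reducible S R \<longleftrightarrow> (\<exists>Fs. is_bond_of S R Fs \<and>
      (\<forall>i<length Fs. 0 < card (fst (Fs!i)) \<and> card (fst (Fs!i)) < card S))"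

definition bond_irreducible :: "nat set \<Rightarrow> (nat \<Rightarrow> 'd) set \<Rightarrow> bool" where
  "bond_irreducible S R \<longleftrightarrow> \<not> bond_reducible S R"

definition subternaric :: "(nat set \<times> (nat \<Rightarrow> 'd) set) list \<Rightarrow> bool" where
  "subternaric Fs \<longleftrightarrow> (\<forall>i<length Fs. card (fst (Fs!i)) \<le> 3)"

definition ternarity :: "nat set \<Rightarrow> (nat \<Rightarrow> 'd) set \<Rightarrow> enat" where
  "ternarity S R = Inf {enat (card {i. i < length Fs \<and> card (fst (Fs!i)) = 3}) | Fs.
                          is_bond_of S R Fs \<and> subternaric Fs}"

definition degenerate :: "nat set \<Rightarrow> (nat \<Rightarrow> 'd) set \<Rightarrow> bool" where
  "degenerate S R \<longleftrightarrow> (\<exists>Ps::(nat set \<times> (nat \<Rightarrow> 'd) set) list. 1 < length Ps \<and>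
      (\<forall>i<length Ps. fst (Ps!i) \<noteq> {} \<and> is_rel (fst (Ps!i)) (snd (Ps!i))) \<and>
      (\<forall>i<length Ps. \<forall>j<length Ps. i \<noteq> j \<longrightarrow> fst (Ps!i) \<inter> fst (Ps!j) = {}) \<and>
      (\<Union>i<length Ps. fst (Ps!i)) = S \<and>
      R = {a \<in> tuples S. \<forall>i<length Ps. restrict a (fst (Ps!i)) \<in> snd (Ps!i)})"

end

theory Submission
  imports Defs
begin

text \<open>The factors of a subternaric bond form a hypergraph on the attributes in
  which every attribute lies in at most two factors; the attributes of the bond are those lying in
  exactly one (the free ones). If the hypergraph splits into two parts without common attributes,
  the bond is the product of the two partial bonds, so by non-degeneracy one part has no free
  attributes; that part only contributes a nullary factor and can be dropped. For a connected
  hypergraph with m factors, t of them ternary, counting incidences gives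
  |free| + 2 |shared| \<le> 2m + t, while connectedness gives |shared| \<ge> m - 1; hence
  n = |free| \<le> t + 2.

  An injective code f of R in the domain yields a chain of n factors, the k-th one
  carrying the k-th attribute of R and link attributes to its neighbours. Each link carries the
  code of the whole tuple, so the chain joins to exactly R, and only its n - 2 inner factors are
  ternary. On an infinite domain D such a code exists because D \<times> D injects into D.\<close>

section \<open>Incidences in a family of attribute sets\<close>

definition occurrences :: "'i set \<Rightarrow> ('i \<Rightarrow> 'a set) \<Rightarrow> 'a \<Rightarrow> nat" where
  "occurrences I A x = card {i\<in>I. x \<in> A i}"

definition free_attrs :: "'i set \<Rightarrow> ('i \<Rightarrow> 'a set) \<Rightarrow> 'a set" where
  "free_attrs I A = {x. occurrences I A x = 1}"

definition shared_attrs :: "'i set \<Rightarrow> ('i \<Rightarrow> 'a set) \<Rightarrow> 'a set" where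
  "shared_attrs I A = {x. \<exists>i\<in>I. \<exists>j\<in>I. i \<noteq> j \<and> x \<in> A i \<and> x \<in> A j}"

definition connected_family :: "'i set \<Rightarrow> ('i \<Rightarrow> 'a set) \<Rightarrow> bool" where
  "connected_family I A \<longleftrightarrow>
     (\<forall>J\<subseteq>I. J \<noteq> {} \<longrightarrow> J \<noteq> I \<longrightarrow> (\<exists>i\<in>J. \<exists>j\<in>I - J. A i \<inter> A j \<noteq> {}))"

lemma occurrences_pos_iff:
  "finite I \<Longrightarrow> 0 < occurrences I A x \<longleftrightarrow> x \<in> (\<Union>i\<in>I. A i)"
  by (auto simp: occurrences_def card_gt_0_iff)

lemma occurrences_mono: "finite I \<Longrightarrow> J \<subseteq> I \<Longrightarrow> occurrences J A x \<le> occurrences I A x"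
  unfolding occurrences_def by (rule card_mono) auto

lemma shared_attrs_iff_occurrences:
  assumes "finite I"
  shows "x \<in> shared_attrs I A \<longleftrightarrow> 2 \<le> occurrences I A x"
proof -
  have "2 \<le> occurrences I A x \<longleftrightarrow> \<not> card {i\<in>I. x \<in> A i} \<le> Suc 0"
    unfolding occurrences_def by linarith
  also have "\<dots> \<longleftrightarrow> x \<in> shared_attrs I A"
    using assms by (subst card_le_Suc0_iff_eq) (auto simp: shared_attrs_def)
  finally show ?thesis ..
qed

lemma shared_attrs_subset: "shared_attrs I A \<subseteq> (\<Union>i\<in>I. A i)"
  by (auto simp: shared_attrs_def)

lemma shared_attrs_mono: "J \<subseteq> I \<Longrightarrow> shared_attrs J A \<subseteq> shared_attrs I A"
  by (auto simp: shared_attrs_def)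

text \<open>Adding to J an edge j that meets J in x makes x shared; x was not shared within J,
  for otherwise it would lie in three edges.\<close>

lemma connected_family_grow:
  assumes fin: "finite I" and finA: "\<forall>i\<in>I. finite (A i)"
    and occ2: "\<forall>x. occurrences I A x \<le> 2" and conn: "connected_family I A"
  shows "1 \<le> k \<Longrightarrow> k \<le> card I \<Longrightarrow> \<exists>J\<subseteq>I. card J = k \<and> k \<le> Suc (card (shared_attrs J A))"
proof (induction k)
  case 0
  then show ?case by simp
next
  case (Suc k)
  show ?case
  proof (cases "k = 0")
    case True
    obtain i where "i \<in> I"
      using Suc.prems by fastforce
    then show ?thesis
      using True by (intro exI[of _ "{i}"]) auto
  next
    case False
    then obtain J where J: "J \<subseteq> I" "card J = k" "k \<le> Suc (card (shared_attrs J A))"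
      using Suc by auto
    have "J \<noteq> {}" "J \<noteq> I"
      using J False Suc.prems by auto
    then obtain i j where "i \<in> J" "j \<in> I - J" "A i \<inter> A j \<noteq> {}"
      using conn J(1) unfolding connected_family_def by meson
    then obtain x where ij: "i \<in> J" "j \<in> I - J" "x \<in> A i" "x \<in> A j"
      by blast
    have finU: "finite (shared_attrs L A)" if "L \<subseteq> I" for L
    proof -
      have "finite (\<Union>i\<in>L. A i)"
        using finite_subset[OF that fin] finA that by auto
      then show ?thesis
        using finite_subset[OF shared_attrs_subset] by blast
    qed
    have "{l \<in> insert j J. x \<in> A l} = insert j {l\<in>J. x \<in> A l}"
      using ij by auto
    then have occ_insert: "occurrences (insert j J) A x = Suc (occurrences J A x)"
      using ij finite_subset[OF J(1) fin] by (simp add: occurrences_def)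
    have "x \<notin> shared_attrs J A"
    proof
      assume "x \<in> shared_attrs J A"
      then have "2 \<le> occurrences J A x"
        using J(1) fin by (simp add: shared_attrs_iff_occurrences finite_subset)
      moreover have "occurrences (insert j J) A x \<le> occurrences I A x"
        using ij J(1) fin by (intro occurrences_mono) auto
      ultimately show False
        using occ2[rule_format, of x] occ_insert by linarith
    qed
    have "x \<in> shared_attrs (insert j J) A"
      using ij unfolding shared_attrs_def by (intro CollectI bexI[of _ i] bexI[of _ j]) auto
    then have subset: "insert x (shared_attrs J A) \<subseteq> shared_attrs (insert j J) A"
      using shared_attrs_mono[of J "insert j J" A] by blast
    have "Suc (card (shared_attrs J A)) = card (insert x (shared_attrs J A))"
      using \<open>x \<notin> shared_attrs J A\<close> finU[OF J(1)] by simp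
    also have "\<dots> \<le> card (shared_attrs (insert j J) A)"
      using ij J(1) by (intro card_mono[OF finU subset]) auto
    finally have "Suc k \<le> Suc (card (shared_attrs (insert j J) A))"
      using J(3) by linarith
    moreover have "card (insert j J) = Suc k"
      using J ij finite_subset[OF J(1) fin] by auto
    ultimately show ?thesis
      using J(1) ij by (intro exI[of _ "insert j J"]) auto
  qed
qed

lemma card_le_Suc_card_shared_attrs:
  assumes "finite I" "\<forall>i\<in>I. finite (A i)" "\<forall>x. occurrences I A x \<le> 2" "connected_family I A"
    and "I \<noteq> {}"
  shows "card I \<le> Suc (card (shared_attrs I A))"
proof -
  obtain J where "J \<subseteq> I" "card J = card I" "card I \<le> Suc (card (shared_attrs J A))"
    using connected_family_grow[OF assms(1-4), of "card I"] assms(1,5)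
    by (auto simp: Suc_le_eq card_gt_0_iff)
  then show ?thesis
    using assms(1) card_subset_eq by metis
qed

lemma sum_card_eq_sum_occurrences:
  assumes "finite I" "\<forall>i\<in>I. finite (A i)"
  shows "(\<Sum>i\<in>I. card (A i)) = (\<Sum>x\<in>(\<Union>i\<in>I. A i). occurrences I A x)"
proof -
  let ?U = "\<Union>i\<in>I. A i"
  have "(\<Sum>i\<in>I. card (A i)) = (\<Sum>i\<in>I. \<Sum>x\<in>?U. if x \<in> A i then 1 else 0)"
  proof (rule sum.cong[OF refl])
    fix i assume "i \<in> I"
    then have "A i = {x\<in>?U. x \<in> A i}" by auto
    then show "card (A i) = (\<Sum>x\<in>?U. if x \<in> A i then 1 else 0)"
      using assms sum.inter_filter[of ?U "\<lambda>_. 1::nat" "\<lambda>x. x \<in> A i"] by simp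
  qed
  also have "\<dots> = (\<Sum>x\<in>?U. \<Sum>i\<in>I. if x \<in> A i then 1 else 0)"
    by (rule sum.swap)
  also have "\<dots> = (\<Sum>x\<in>?U. occurrences I A x)"
    unfolding occurrences_def using sum.inter_filter[OF assms(1), of "\<lambda>_. 1::nat"] by simp
  finally show ?thesis .
qed

lemma sum_card_eq_free_shared:
  assumes fin: "finite I" and finA: "\<forall>i\<in>I. finite (A i)" and occ2: "\<forall>x. occurrences I A x \<le> 2"
  shows "(\<Sum>i\<in>I. card (A i)) = card (free_attrs I A) + 2 * card (shared_attrs I A)"
proof -
  let ?U = "\<Union>i\<in>I. A i"
  have finU: "finite ?U"
    using fin finA by auto
  have "x \<in> free_attrs I A \<longleftrightarrow> x \<in> ?U \<and> occurrences I A x = 1" for x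
    using occurrences_pos_iff[OF fin, of A x] by (auto simp: free_attrs_def)
  then have free: "free_attrs I A = {x\<in>?U. occurrences I A x = 1}"
    by (simp add: set_eq_iff)
  have "x \<in> shared_attrs I A \<longleftrightarrow> occurrences I A x = 2" for x
    using occ2[rule_format, of x] by (auto simp: shared_attrs_iff_occurrences[OF fin])
  then have shared: "shared_attrs I A = {x\<in>?U. occurrences I A x = 2}"
    using shared_attrs_subset[of I A] by auto
  have "(\<Sum>x\<in>?U. occurrences I A x) =
      (\<Sum>x\<in>?U. (if occurrences I A x = 1 then 1 else 0) + 2 * (if occurrences I A x = 2 then 1 else 0))"
  proof (rule sum.cong[OF refl])
    fix x assume "x \<in> ?U"
    then have "0 < occurrences I A x"
      using occurrences_pos_iff[OF fin, of A x] by blast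
    then have "occurrences I A x = 1 \<or> occurrences I A x = 2"
      using occ2[rule_format, of x] by arith
    then show "occurrences I A x =
        (if occurrences I A x = 1 then 1 else 0) + 2 * (if occurrences I A x = 2 then 1 else 0)"
      by auto
  qed
  also have "\<dots> = card (free_attrs I A) + 2 * card (shared_attrs I A)"
    unfolding free shared
    by (simp add: sum.distrib sum_distrib_left[symmetric] sum.inter_filter[OF finU, symmetric])
  finally show ?thesis
    using sum_card_eq_sum_occurrences[OF fin finA] by simp
qed

lemma card_free_attrs_le_if_connected:
  assumes fin: "finite I" and finA: "\<forall>i\<in>I. finite (A i)" and le3: "\<forall>i\<in>I. card (A i) \<le> 3"
    and occ2: "\<forall>x. occurrences I A x \<le> 2" and conn: "connected_family I A"
  shows "card (free_attrs I A) \<le> card {i\<in>I. card (A i) = 3} + 2"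
proof (cases "I = {}")
  case True
  then show ?thesis
    by (simp add: free_attrs_def occurrences_def)
next
  case False
  have "(\<Sum>i\<in>I. card (A i)) \<le> (\<Sum>i\<in>I. 2 + (if card (A i) = 3 then 1 else 0))"
    using le3 by (intro sum_mono) (auto simp: le_Suc_eq numeral_3_eq_3)
  also have "\<dots> = 2 * card I + card {i\<in>I. card (A i) = 3}"
    by (simp only: sum.distrib sum.inter_filter[OF fin, symmetric]) (simp add: mult.commute)
  finally show ?thesis
    using sum_card_eq_free_shared[OF fin finA occ2]
      card_le_Suc_card_shared_attrs[OF fin finA occ2 conn False] by linarith
qed

lemma free_attrs_subset:
  assumes "finite I"
  shows "free_attrs I A \<subseteq> (\<Union>i\<in>I. A i)"
proof
  fix x assume "x \<in> free_attrs I A"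
  then have "0 < occurrences I A x"
    by (simp add: free_attrs_def)
  then show "x \<in> (\<Union>i\<in>I. A i)"
    by (simp add: occurrences_pos_iff[OF assms])
qed

lemma occurrences_Un:
  "finite J \<Longrightarrow> finite K \<Longrightarrow> J \<inter> K = {} \<Longrightarrow>
    occurrences (J \<union> K) A x = occurrences J A x + occurrences K A x"
  unfolding occurrences_def by (subst card_Un_disjoint[symmetric]) (auto intro: arg_cong[where f = card])

lemma free_attrs_Un:
  assumes "finite J" "finite K" "J \<inter> K = {}" and disj: "\<forall>i\<in>J. \<forall>j\<in>K. A i \<inter> A j = {}"
  shows "free_attrs (J \<union> K) A = free_attrs J A \<union> free_attrs K A"
proof -
  have "\<not> (x \<in> (\<Union>i\<in>J. A i) \<and> x \<in> (\<Union>i\<in>K. A i))" for x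
    using disj by blast
  then have "occurrences J A x = 0 \<or> occurrences K A x = 0" for x
    using occurrences_pos_iff[OF assms(1), of A x] occurrences_pos_iff[OF assms(2), of A x]
    by (meson gr0I)
  then show ?thesis
    by (force simp: free_attrs_def occurrences_Un[OF assms(1-3)])
qed

section \<open>Tuples, products and joins\<close>

lemma mem_tuples: "a \<in> tuples S \<longleftrightarrow> (\<forall>x. x \<notin> S \<longrightarrow> a x = undefined)"
  by (auto simp: tuples_def PiE_def extensional_def)

lemma restrict_tuples [simp]: "a \<in> tuples S \<Longrightarrow> restrict a S = a"
  by (simp add: tuples_def)

lemma restrict_in_tuples [simp]: "restrict a S \<in> tuples S"
  by (simp add: tuples_def)

lemma proj_subset_tuples: "proj S Q \<subseteq> tuples S"
  by (auto simp: proj_def)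

lemma proj_empty_attrs: "proj {} Q = (if Q = {} then {} else {\<lambda>_. undefined})"
  by (auto simp: proj_def restrict_def)

definition product_rel :: "nat set \<Rightarrow> (nat \<Rightarrow> 'd) set \<Rightarrow> nat set \<Rightarrow> (nat \<Rightarrow> 'd) set \<Rightarrow> (nat \<Rightarrow> 'd) set" where
  "product_rel X B Y C = {b \<in> tuples (X \<union> Y). restrict b X \<in> B \<and> restrict b Y \<in> C}"

lemma product_rel_empty_attrs:
  "B \<subseteq> tuples X \<Longrightarrow> product_rel X B {} (proj {} Q) = (if Q = {} then {} else B)"
  by (auto simp: product_rel_def proj_empty_attrs restrict_def[of _ "{}"])

lemma degenerate_product_rel:
  assumes "X \<inter> Y = {}" "X \<noteq> {}" "Y \<noteq> {}" "is_rel X B" "is_rel Y C"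
  shows "degenerate (X \<union> Y) (product_rel X B Y C)"
  unfolding degenerate_def
proof (intro exI[of _ "[(X, B), (Y, C)]"] conjI)
  let ?Ps = "[(X, B), (Y, C)]"
  show "1 < length ?Ps"
    by simp
  show "\<forall>i<length ?Ps. fst (?Ps!i) \<noteq> {} \<and> is_rel (fst (?Ps!i)) (snd (?Ps!i))"
    using assms(2-5) by (simp add: less_Suc_eq)
  show "\<forall>i<length ?Ps. \<forall>j<length ?Ps. i \<noteq> j \<longrightarrow> fst (?Ps!i) \<inter> fst (?Ps!j) = {}"
    using assms(1) by (simp add: less_Suc_eq Int_commute)
  show "(\<Union>i<length ?Ps. fst (?Ps!i)) = X \<union> Y"
    by (simp add: lessThan_Suc numeral_2_eq_2 Un_commute)
  show "product_rel X B Y C =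
      {a \<in> tuples (X \<union> Y). \<forall>i<length ?Ps. restrict a (fst (?Ps!i)) \<in> snd (?Ps!i)}"
    by (simp add: product_rel_def less_Suc_eq all_conj_distrib)
qed

lemma degenerate_empty:
  assumes "2 \<le> card S"
  shows "degenerate S ({} :: (nat \<Rightarrow> 'd) set)"
proof -
  have "S \<noteq> {}"
    using assms by auto
  then obtain x where x: "x \<in> S"
    by blast
  have "S - {x} \<noteq> {}"
  proof
    assume "S - {x} = {}"
    then have "S = {x}"
      using x by blast
    then show False
      using assms by simp
  qed
  moreover have "finite S"
    using assms by (metis card.infinite not_numeral_le_zero)
  ultimately have "degenerate ({x} \<union> (S - {x}))
      (product_rel {x} ({} :: (nat \<Rightarrow> 'd) set) (S - {x}) (tuples (S - {x})))"
    by (intro degenerate_product_rel) (auto simp: is_rel_def)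
  moreover have "product_rel {x} ({} :: (nat \<Rightarrow> 'd) set) (S - {x}) (tuples (S - {x})) = {}"
    by (simp add: product_rel_def)
  ultimately show ?thesis
    using x by (simp add: insert_absorb)
qed

definition join_family :: "'i set \<Rightarrow> ('i \<Rightarrow> nat set) \<Rightarrow> ('i \<Rightarrow> (nat \<Rightarrow> 'd) set) \<Rightarrow> (nat \<Rightarrow> 'd) set" where
  "join_family I A Q = {a \<in> tuples (\<Union>i\<in>I. A i). \<forall>i\<in>I. restrict a (A i) \<in> Q i}"

lemma join_eq_join_family: "join Fs = join_family {..<length Fs} (\<lambda>i. fst (Fs!i)) (\<lambda>i. snd (Fs!i))"
  by (auto simp: join_def join_family_def)

lemma join_family_cong:
  "(\<And>i. i \<in> I \<Longrightarrow> A i = A' i) \<Longrightarrow> (\<And>i. i \<in> I \<Longrightarrow> Q i = Q' i) \<Longrightarrow>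
    join_family I A Q = join_family I A' Q'"
  by (simp add: join_family_def)

lemma restrict_join_family:
  assumes "a \<in> join_family I A Q" "J \<subseteq> I"
  shows "restrict a (\<Union>i\<in>J. A i) \<in> join_family J A Q"
proof -
  have "restrict (restrict a (\<Union>i\<in>J. A i)) (A i) = restrict a (A i)" if "i \<in> J" for i
    using that by (auto simp: Int_absorb1)
  then show ?thesis
    using assms by (auto simp: join_family_def)
qed

lemma glue_join_family:
  assumes disj: "\<forall>i\<in>J. \<forall>j\<in>K. A i \<inter> A j = {}"
    and a: "a \<in> join_family J A Q" and b: "b \<in> join_family K A Q"
  shows "(\<lambda>x. if x \<in> (\<Union>i\<in>J. A i) then a x else b x) \<in> join_family (J \<union> K) A Q"
    (is "?c \<in> _")
proof -
  have "restrict ?c (A i) = restrict a (A i)" if "i \<in> J" for i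
    using that by (auto simp: restrict_def)
  moreover have "restrict ?c (A i) = restrict b (A i)" if "i \<in> K" for i
    using that disj by (fastforce simp: restrict_def)
  moreover have "?c \<in> tuples (\<Union>i\<in>J \<union> K. A i)"
    using a b by (auto simp: join_family_def mem_tuples)
  ultimately show ?thesis
    using a b by (auto simp: join_family_def)
qed

lemma proj_join_family_Un:
  assumes disj: "\<forall>i\<in>J. \<forall>j\<in>K. A i \<inter> A j = {}"
    and X: "X \<subseteq> (\<Union>i\<in>J. A i)" and Y: "Y \<subseteq> (\<Union>i\<in>K. A i)"
  shows "proj (X \<union> Y) (join_family (J \<union> K) A Q) =
    product_rel X (proj X (join_family J A Q)) Y (proj Y (join_family K A Q))"
proof (intro set_eqI iffI)
  fix c assume "c \<in> proj (X \<union> Y) (join_family (J \<union> K) A Q)"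
  then obtain a where a: "a \<in> join_family (J \<union> K) A Q" and c: "c = restrict a (X \<union> Y)"
    by (auto simp: proj_def)
  have "restrict c X = restrict (restrict a (\<Union>i\<in>J. A i)) X"
    using X by (simp add: c Int_absorb1 Int_absorb2)
  moreover have "restrict a (\<Union>i\<in>J. A i) \<in> join_family J A Q"
    by (rule restrict_join_family[OF a]) simp
  ultimately have cX: "restrict c X \<in> proj X (join_family J A Q)"
    unfolding proj_def by (rule image_eqI)
  have "restrict c Y = restrict (restrict a (\<Union>i\<in>K. A i)) Y"
    using Y by (simp add: c Int_absorb1 Int_absorb2)
  moreover have "restrict a (\<Union>i\<in>K. A i) \<in> join_family K A Q"
    by (rule restrict_join_family[OF a]) simp
  ultimately have cY: "restrict c Y \<in> proj Y (join_family K A Q)"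
    unfolding proj_def by (rule image_eqI)
  show "c \<in> product_rel X (proj X (join_family J A Q)) Y (proj Y (join_family K A Q))"
    using cX cY by (simp add: product_rel_def c)
next
  fix c assume "c \<in> product_rel X (proj X (join_family J A Q)) Y (proj Y (join_family K A Q))"
  then obtain a b where c: "c \<in> tuples (X \<union> Y)"
    and a: "a \<in> join_family J A Q" "restrict c X = restrict a X"
    and b: "b \<in> join_family K A Q" "restrict c Y = restrict b Y"
    by (auto simp: product_rel_def proj_def)
  let ?g = "\<lambda>x. if x \<in> (\<Union>i\<in>J. A i) then a x else b x"
  have "c = restrict ?g (X \<union> Y)"
  proof
    fix x
    have "x \<notin> (\<Union>i\<in>J. A i)" if "x \<in> Y"
      using that Y disj by blast
    then show "c x = restrict ?g (X \<union> Y) x"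
      using X fun_cong[OF a(2), of x] fun_cong[OF b(2), of x] c
      by (auto simp: mem_tuples)
  qed
  moreover have "?g \<in> join_family (J \<union> K) A Q"
    by (rule glue_join_family[OF disj a(1) b(1)])
  ultimately show "c \<in> proj (X \<union> Y) (join_family (J \<union> K) A Q)"
    unfolding proj_def by (rule image_eqI)
qed

section \<open>The lower bound\<close>

definition family_bond :: "'i set \<Rightarrow> ('i \<Rightarrow> nat set) \<Rightarrow> ('i \<Rightarrow> (nat \<Rightarrow> 'd) set) \<Rightarrow> (nat \<Rightarrow> 'd) set" where
  "family_bond I A Q = proj (free_attrs I A) (join_family I A Q)"

lemma is_rel_family_bond:
  assumes "finite I" "\<forall>i\<in>I. finite (A i)"
  shows "is_rel (free_attrs I A) (family_bond I A Q)"
proof -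
  have "finite (\<Union>i\<in>I. A i)"
    using assms by auto
  then show ?thesis
    using free_attrs_subset[OF assms(1), of A] proj_subset_tuples
    by (auto simp: is_rel_def family_bond_def intro: finite_subset)
qed

lemma family_bond_Un:
  assumes "finite J" "finite K" "J \<inter> K = {}" and disj: "\<forall>i\<in>J. \<forall>j\<in>K. A i \<inter> A j = {}"
  shows "family_bond (J \<union> K) A Q =
    product_rel (free_attrs J A) (family_bond J A Q) (free_attrs K A) (family_bond K A Q)"
  using proj_join_family_Un[OF disj free_attrs_subset[OF assms(1)] free_attrs_subset[OF assms(2)]]
  by (simp add: family_bond_def free_attrs_Un[OF assms])

lemma family_bond_Un_no_free_attrs:
  assumes "finite J" "finite K" "J \<inter> K = {}" "\<forall>i\<in>J. \<forall>j\<in>K. A i \<inter> A j = {}"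
    and "free_attrs K A = {}"
  shows "family_bond (J \<union> K) A Q = (if join_family K A Q = {} then {} else family_bond J A Q)"
proof -
  have "family_bond (J \<union> K) A Q =
      product_rel (free_attrs J A) (family_bond J A Q) {} (proj {} (join_family K A Q))"
    using family_bond_Un[OF assms(1-4), of Q] assms(5) by (simp add: family_bond_def[of K])
  also have "\<dots> = (if join_family K A Q = {} then {} else family_bond J A Q)"
    unfolding family_bond_def by (rule product_rel_empty_attrs[OF proj_subset_tuples])
  finally show ?thesis .
qed

lemma degenerate_family_bond_Un:
  assumes "finite J" "finite K" "J \<inter> K = {}" and disj: "\<forall>i\<in>J. \<forall>j\<in>K. A i \<inter> A j = {}"
    and "\<forall>i\<in>J \<union> K. finite (A i)" "free_attrs J A \<noteq> {}" "free_attrs K A \<noteq> {}"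
  shows "degenerate (free_attrs (J \<union> K) A) (family_bond (J \<union> K) A Q)"
proof -
  have "free_attrs J A \<inter> free_attrs K A = {}"
    using free_attrs_subset[OF assms(1), of A] free_attrs_subset[OF assms(2), of A] disj by blast
  then show ?thesis
    using degenerate_product_rel[OF _ assms(6,7) is_rel_family_bond is_rel_family_bond] assms(1,2,5)
    by (simp add: family_bond_Un[OF assms(1-4)] free_attrs_Un[OF assms(1-4)])
qed

lemma family_bond_reduce_disconnected:
  fixes Q :: "'i \<Rightarrow> (nat \<Rightarrow> 'd) set"
  assumes fin: "finite I" and finA: "\<forall>i\<in>I. finite (A i)" and disconn: "\<not> connected_family I A"
    and two: "2 \<le> card (free_attrs I A)"
    and nondeg: "\<not> degenerate (free_attrs I A) (family_bond I A Q)"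
  obtains L where "L \<subset> I" "free_attrs L A = free_attrs I A" "family_bond L A Q = family_bond I A Q"
proof -
  note result = that
  obtain J where J: "J \<subseteq> I" "J \<noteq> {}" "J \<noteq> I"
    and disj: "\<forall>i\<in>J. \<forall>j\<in>I - J. A i \<inter> A j = {}"
    using disconn unfolding connected_family_def by blast
  have reduce: thesis
    if LM: "I = L \<union> M" "L \<inter> M = {}" "M \<noteq> {}" "\<forall>i\<in>L. \<forall>j\<in>M. A i \<inter> A j = {}"
      and no_free: "free_attrs M A = {}" for L M
  proof -
    have finLM: "finite L" "finite M"
      using fin LM(1) by auto
    have "join_family M A Q \<noteq> {}"
      using family_bond_Un_no_free_attrs[OF finLM LM(2,4) no_free, of Q] LM(1)
        nondeg degenerate_empty[OF two, where 'd = 'd] by auto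
    then have "family_bond L A Q = family_bond I A Q"
      using family_bond_Un_no_free_attrs[OF finLM LM(2,4) no_free, of Q] LM(1) by simp
    moreover have "free_attrs L A = free_attrs I A"
      using free_attrs_Un[OF finLM LM(2,4)] no_free LM(1) by simp
    moreover have "L \<subset> I"
      using LM(1-3) by blast
    ultimately show thesis
      using result by blast
  qed
  define K where "K = I - J"
  have IJK: "I = J \<union> K" "J \<inter> K = {}" "K \<noteq> {}"
    using J by (auto simp: K_def)
  have finJK: "finite J" "finite K"
    using fin IJK(1) by auto
  have disjJK: "\<forall>i\<in>J. \<forall>j\<in>K. A i \<inter> A j = {}" and disjKJ: "\<forall>i\<in>K. \<forall>j\<in>J. A i \<inter> A j = {}"
    using disj by (auto simp: K_def)
  consider "free_attrs K A = {}" | "free_attrs J A = {}" | "free_attrs J A \<noteq> {}" "free_attrs K A \<noteq> {}"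
    by blast
  then show thesis
  proof cases
    case 1
    then show thesis
      by (rule reduce[OF IJK disjJK])
  next
    case 2
    then show thesis
      using reduce[of K J] IJK J(2) disjKJ by (simp add: Un_commute Int_commute)
  next
    case 3
    then show thesis
      using degenerate_family_bond_Un[OF finJK IJK(2) disjJK, of Q] IJK(1) finA nondeg by simp
  qed
qed

lemma card_free_attrs_le_ternary:
  fixes Q :: "'i \<Rightarrow> (nat \<Rightarrow> 'd) set"
  assumes "finite I" "\<forall>i\<in>I. is_rel (A i) (Q i)" "\<forall>i\<in>I. card (A i) \<le> 3"
    and "\<forall>x. occurrences I A x \<le> 2" "2 \<le> card (free_attrs I A)"
    and "\<not> degenerate (free_attrs I A) (family_bond I A Q)"
  shows "card (free_attrs I A) \<le> card {i\<in>I. card (A i) = 3} + 2"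
  using assms
proof (induction "card I" arbitrary: I rule: less_induct)
  case less
  note fin = less.prems(1) and rel = less.prems(2) and le3 = less.prems(3)
    and occ2 = less.prems(4) and two = less.prems(5) and nondeg = less.prems(6)
  have finA: "\<forall>i\<in>I. finite (A i)"
    using rel by (simp add: is_rel_def)
  show ?case
  proof (cases "connected_family I A")
    case True
    then show ?thesis
      using card_free_attrs_le_if_connected[OF fin finA le3 occ2] by blast
  next
    case False
    then obtain L where L: "L \<subset> I" "free_attrs L A = free_attrs I A"
      "family_bond L A Q = family_bond I A Q"
      using family_bond_reduce_disconnected[OF fin finA _ two nondeg] by blast
    have sub: "L \<subseteq> I"
      using L(1) by blast
    have "card L < card I"
      by (rule psubset_card_mono[OF fin L(1)])
    moreover have "\<forall>x. occurrences L A x \<le> 2"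
      using occ2 occurrences_mono[OF fin sub, of A] order_trans by blast
    ultimately have "card (free_attrs L A) \<le> card {i\<in>L. card (A i) = 3} + 2"
      using less.hyps[of L] finite_subset[OF sub fin] sub rel le3 two nondeg L(2,3) by auto
    moreover have "card {i\<in>L. card (A i) = 3} \<le> card {i\<in>I. card (A i) = 3}"
      using fin sub by (intro card_mono) auto
    ultimately show ?thesis
      using L(2) by simp
  qed
qed

definition ternary_count :: "(nat set \<times> (nat \<Rightarrow> 'd) set) list \<Rightarrow> nat" where
  "ternary_count Fs = card {i. i < length Fs \<and> card (fst (Fs!i)) = 3}"

lemma le_ternarityI:
  assumes "\<And>Fs. is_bond_of S R Fs \<Longrightarrow> subternaric Fs \<Longrightarrow> k \<le> ternary_count Fs"
  shows "enat k \<le> ternarity S R"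
  unfolding ternarity_def using assms by (auto intro!: Inf_greatest simp: ternary_count_def)

lemma ternarity_le:
  "is_bond_of S R Fs \<Longrightarrow> subternaric Fs \<Longrightarrow> ternarity S R \<le> enat (ternary_count Fs)"
  unfolding ternarity_def ternary_count_def by (rule Inf_lower) blast

lemma occ_eq_occurrences: "occ Fs x = occurrences {..<length Fs} (\<lambda>i. fst (Fs!i)) x"
  unfolding occ_def occurrences_def by (rule arg_cong[where f = card]) auto

lemma bond_attrs_eq_free_attrs: "bond_attrs Fs = free_attrs {..<length Fs} (\<lambda>i. fst (Fs!i))"
  by (simp add: bond_attrs_def free_attrs_def occ_eq_occurrences)

lemma bond_eq_family_bond: "bond Fs = family_bond {..<length Fs} (\<lambda>i. fst (Fs!i)) (\<lambda>i. snd (Fs!i))"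
  by (simp add: bond_def family_bond_def bond_attrs_eq_free_attrs join_eq_join_family)

lemma card_le_ternary_count_if_bond:
  fixes Fs :: "(nat set \<times> (nat \<Rightarrow> 'd) set) list"
  assumes bond: "is_bond_of S R Fs" and sub: "subternaric Fs"
    and two: "2 \<le> card S" and nondeg: "\<not> degenerate S R"
  shows "card S \<le> ternary_count Fs + 2"
proof -
  let ?I = "{..<length Fs}" and ?A = "\<lambda>i. fst (Fs!i)" and ?Q = "\<lambda>i. snd (Fs!i)"
  have S: "free_attrs ?I ?A = S" and R: "family_bond ?I ?A ?Q = R"
    using bond by (auto simp: is_bond_of_def bond_attrs_eq_free_attrs bond_eq_family_bond)
  have "card (free_attrs ?I ?A) \<le> card {i\<in>?I. card (?A i) = 3} + 2"
  proof (rule card_free_attrs_le_ternary)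
    show "\<forall>i\<in>?I. is_rel (?A i) (?Q i)" "\<forall>x. occurrences ?I ?A x \<le> 2"
      using bond by (auto simp: is_bond_of_def bondable_def occ_eq_occurrences[symmetric])
    show "\<forall>i\<in>?I. card (?A i) \<le> 3"
      using sub by (simp add: subternaric_def)
  qed (use S R two nondeg in auto)
  then show ?thesis
    using S by (simp add: ternary_count_def)
qed

lemma card_minus_2_le_ternarity:
  assumes "2 \<le> card S" "\<not> degenerate S R"
  shows "enat (card S - 2) \<le> ternarity S R"
proof (rule le_ternarityI)
  fix Fs assume "is_bond_of S R Fs" "subternaric Fs"
  then show "card S - 2 \<le> ternary_count Fs"
    using card_le_ternary_count_if_bond assms by fastforce
qed

lemma bond_irreducible_if_ternary:
  assumes "card S = 3" "\<not> degenerate S R"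
  shows "bond_irreducible S R"
  unfolding bond_irreducible_def bond_reducible_def
proof
  assume "\<exists>Fs. is_bond_of S R Fs \<and> (\<forall>i<length Fs. 0 < card (fst (Fs!i)) \<and> card (fst (Fs!i)) < card S)"
  then obtain Fs where bond: "is_bond_of S R Fs" and lt: "\<forall>i<length Fs. card (fst (Fs!i)) < 3"
    using assms(1) by auto
  have "subternaric Fs" "ternary_count Fs = 0"
    using lt by (auto simp: subternaric_def ternary_count_def less_imp_le)
  then show False
    using card_le_ternary_count_if_bond[OF bond _ _ assms(2)] assms(1) by simp
qed

section \<open>Chain bonds\<close>

definition link_attr :: "nat set \<Rightarrow> nat \<Rightarrow> nat" where
  "link_attr S j = Suc (Max S) + j"

definition chain_attrs :: "nat set \<Rightarrow> nat \<Rightarrow> nat set" where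
  "chain_attrs S k = insert (sorted_list_of_set S ! k)
     ((if 0 < k then {link_attr S (k - 1)} else {}) \<union> (if Suc k < card S then {link_attr S k} else {}))"

definition code_extend :: "nat set \<Rightarrow> ((nat \<Rightarrow> 'd) \<Rightarrow> 'd) \<Rightarrow> (nat \<Rightarrow> 'd) \<Rightarrow> nat \<Rightarrow> 'd" where
  "code_extend S f r z = (if z \<in> S then r z else f r)"

definition chain_factors ::
    "nat set \<Rightarrow> ((nat \<Rightarrow> 'd) \<Rightarrow> 'd) \<Rightarrow> (nat \<Rightarrow> 'd) set \<Rightarrow> (nat set \<times> (nat \<Rightarrow> 'd) set) list" where
  "chain_factors S f R =
     map (\<lambda>k. (chain_attrs S k, proj (chain_attrs S k) (code_extend S f ` R))) [0..<card S]"

lemma link_attr_eq_iff [simp]: "link_attr S i = link_attr S j \<longleftrightarrow> i = j"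
  by (simp add: link_attr_def)

lemma length_chain_factors [simp]: "length (chain_factors S f R) = card S"
  by (simp add: chain_factors_def)

lemma nth_chain_factors [simp]:
  "k < card S \<Longrightarrow> chain_factors S f R ! k = (chain_attrs S k, proj (chain_attrs S k) (code_extend S f ` R))"
  by (simp add: chain_factors_def)

lemma mem_chain_attrs:
  "z \<in> chain_attrs S k \<longleftrightarrow> z = sorted_list_of_set S ! k \<or>
     (0 < k \<and> z = link_attr S (k - 1)) \<or> (Suc k < card S \<and> z = link_attr S k)"
  by (auto simp: chain_attrs_def)

lemma sorted_nth_eq_iff:
  "k < card S \<Longrightarrow> j < card S \<Longrightarrow> sorted_list_of_set S ! k = sorted_list_of_set S ! j \<longleftrightarrow> k = j"
  by (simp add: nth_eq_iff_index_eq)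

context
  fixes S :: "nat set"
  assumes fin: "finite S"
begin

lemma link_attr_notin: "link_attr S j \<notin> S"
  using Max_ge[OF fin] by (fastforce simp: link_attr_def)

lemma sorted_nth_in: "k < card S \<Longrightarrow> sorted_list_of_set S ! k \<in> S"
  using fin by (metis length_sorted_list_of_set nth_mem set_sorted_list_of_set)

lemma sorted_nth_neq_link: "k < card S \<Longrightarrow> sorted_list_of_set S ! k \<noteq> link_attr S j"
  using sorted_nth_in link_attr_notin by metis

lemma chain_attrs_containing_attr:
  assumes "j < card S"
  shows "{k. k < card S \<and> sorted_list_of_set S ! j \<in> chain_attrs S k} = {j}"
proof -
  have "sorted_list_of_set S ! j \<in> chain_attrs S k \<longleftrightarrow> k = j" if "k < card S" for k
    using sorted_nth_neq_link[OF assms] sorted_nth_eq_iff[OF assms that]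
    by (auto simp: mem_chain_attrs)
  then show ?thesis
    using assms by auto
qed

lemma chain_attrs_containing_link:
  assumes "Suc j < card S"
  shows "{k. k < card S \<and> link_attr S j \<in> chain_attrs S k} = {j, Suc j}"
proof -
  have "link_attr S j \<in> chain_attrs S k \<longleftrightarrow> (0 < k \<and> j = k - 1) \<or> (Suc k < card S \<and> j = k)"
    if "k < card S" for k
    using sorted_nth_neq_link[OF that, of j] by (auto simp: mem_chain_attrs)
  then show ?thesis
    using assms by auto
qed

lemma chain_attrs_containing_other:
  assumes "z \<notin> S" "z \<notin> link_attr S ` {j. Suc j < card S}"
  shows "{k. k < card S \<and> z \<in> chain_attrs S k} = {}"
proof -
  have "z \<notin> chain_attrs S k" if "k < card S" for k
  proof -
    have "z \<noteq> link_attr S (k - 1)" if "0 < k"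
      using assms(2) \<open>k < card S\<close> that by auto
    moreover have "z \<noteq> link_attr S k" if "Suc k < card S"
      using assms(2) that by auto
    ultimately show ?thesis
      using assms(1) sorted_nth_in[OF that] by (auto simp: mem_chain_attrs)
  qed
  then show ?thesis
    by auto
qed

lemma occ_chain_factors:
  "occ (chain_factors S f R) z =
    (if z \<in> S then 1 else if z \<in> link_attr S ` {j. Suc j < card S} then 2 else 0)"
proof -
  have occ: "occ (chain_factors S f R) z = card {k. k < card S \<and> z \<in> chain_attrs S k}"
    unfolding occ_def by (rule arg_cong[where f = card]) auto
  show ?thesis
  proof (cases "z \<in> S")
    case True
    then obtain j where "j < card S" "z = sorted_list_of_set S ! j"
      using fin by (metis in_set_conv_nth length_sorted_list_of_set set_sorted_list_of_set)
    then show ?thesis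
      using True occ chain_attrs_containing_attr by simp
  next
    case False
    then show ?thesis
      using occ chain_attrs_containing_link chain_attrs_containing_other by auto
  qed
qed

lemma bond_attrs_chain_factors: "bond_attrs (chain_factors S f R) = S"
  by (auto simp: bond_attrs_def occ_chain_factors)

lemma bondable_chain_factors: "bondable (chain_factors S f R)"
  by (auto simp: bondable_def occ_chain_factors is_rel_def chain_attrs_def proj_subset_tuples)

lemma card_chain_attrs:
  assumes "k < card S"
  shows "card (chain_attrs S k) = 1 + (if 0 < k then 1 else 0) + (if Suc k < card S then 1 else 0)"
  using sorted_nth_neq_link[OF assms] by (simp add: chain_attrs_def card_insert_if)

lemma subternaric_chain_factors: "subternaric (chain_factors S f R)"
  by (simp add: subternaric_def card_chain_attrs)

lemma ternary_count_chain_factors: "ternary_count (chain_factors S f R) = card S - 2"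
proof -
  have "{k. k < length (chain_factors S f R) \<and> card (fst (chain_factors S f R ! k)) = 3} =
      {k. k < card S \<and> card (chain_attrs S k) = 3}"
    by auto
  also have "\<dots> = {1..<card S - 1}"
    by (auto simp: card_chain_attrs split: if_splits)
  finally show ?thesis
    by (simp add: ternary_count_def)
qed

end

lemma join_chain_factors_eq_join_family:
  "join (chain_factors S f R) =
    join_family {..<card S} (chain_attrs S) (\<lambda>k. proj (chain_attrs S k) (code_extend S f ` R))"
  unfolding join_eq_join_family length_chain_factors by (rule join_family_cong) simp_all

lemma mem_join_chain_factors:
  fixes f :: "(nat \<Rightarrow> 'd) \<Rightarrow> 'd"
  assumes fin: "finite S" and ne: "S \<noteq> {}" and inj: "inj_on f R"
    and a: "a \<in> join (chain_factors S f R)"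
  shows "\<exists>r\<in>R. a = restrict (code_extend S f r) (\<Union>k<card S. chain_attrs S k)"
proof -
  have "\<forall>k<card S. \<exists>r\<in>R. restrict a (chain_attrs S k) = restrict (code_extend S f r) (chain_attrs S k)"
    using a by (auto simp: join_chain_factors_eq_join_family join_family_def proj_def)
  then obtain rr where rr: "\<And>k. k < card S \<Longrightarrow> rr k \<in> R"
    and a_rr: "\<And>k. k < card S \<Longrightarrow>
      restrict a (chain_attrs S k) = restrict (code_extend S f (rr k)) (chain_attrs S k)"
    by metis
  have val: "a z = code_extend S f (rr k) z" if "k < card S" "z \<in> chain_attrs S k" for k z
    using fun_cong[OF a_rr[OF that(1)], of z] that(2) by simp
  text \<open>Neighbouring factors share a link attribute, on which both carry the code of their tuple.\<close>
  have same: "rr k = rr 0" if "k < card S" for k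
    using that
  proof (induction k)
    case (Suc k)
    have "link_attr S k \<in> chain_attrs S k" "link_attr S k \<in> chain_attrs S (Suc k)"
      using Suc.prems by (auto simp: mem_chain_attrs)
    then have "f (rr k) = f (rr (Suc k))"
      using val[of k "link_attr S k"] val[of "Suc k" "link_attr S k"] Suc.prems
        link_attr_notin[OF fin] by (simp add: code_extend_def)
    then show ?case
      using Suc rr inj by (auto dest: inj_onD)
  qed simp
  have "a z = restrict (code_extend S f (rr 0)) (\<Union>k<card S. chain_attrs S k) z" for z
  proof (cases "z \<in> (\<Union>k<card S. chain_attrs S k)")
    case True
    then obtain k where k: "k < card S" "z \<in> chain_attrs S k"
      by blast
    then show ?thesis
      using True val[OF k] same[OF k(1)] by simp
  next
    case False
    then show ?thesis
      using a by (simp add: join_chain_factors_eq_join_family join_family_def mem_tuples)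
  qed
  moreover have "0 < card S"
    using ne fin by (simp add: card_gt_0_iff)
  ultimately show ?thesis
    using rr by (intro bexI[of _ "rr 0"] ext) auto
qed

lemma join_chain_factors:
  fixes f :: "(nat \<Rightarrow> 'd) \<Rightarrow> 'd"
  assumes fin: "finite S" and ne: "S \<noteq> {}" and inj: "inj_on f R"
  shows "join (chain_factors S f R) =
    (\<lambda>r. restrict (code_extend S f r) (\<Union>k<card S. chain_attrs S k)) ` R"
proof (intro equalityI subsetI)
  fix a assume "a \<in> join (chain_factors S f R)"
  then show "a \<in> (\<lambda>r. restrict (code_extend S f r) (\<Union>k<card S. chain_attrs S k)) ` R"
    using mem_join_chain_factors[OF fin ne inj] by blast
next
  fix a assume "a \<in> (\<lambda>r. restrict (code_extend S f r) (\<Union>k<card S. chain_attrs S k)) ` R"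
  then obtain r where r: "r \<in> R" "a = restrict (code_extend S f r) (\<Union>k<card S. chain_attrs S k)"
    by blast
  then have "restrict a (chain_attrs S k) = restrict (code_extend S f r) (chain_attrs S k)"
    if "k < card S" for k
    using that by (auto simp: Int_absorb1)
  then show "a \<in> join (chain_factors S f R)"
    using r by (auto simp: join_chain_factors_eq_join_family join_family_def proj_def)
qed

lemma bond_chain_factors:
  fixes f :: "(nat \<Rightarrow> 'd) \<Rightarrow> 'd"
  assumes rel: "is_rel S R" and ne: "S \<noteq> {}" and inj: "inj_on f R"
  shows "bond (chain_factors S f R) = R"
proof -
  let ?U = "\<Union>k<card S. chain_attrs S k"
  have fin: "finite S"
    using rel by (simp add: is_rel_def)
  have "S \<subseteq> ?U"
  proof
    fix z assume "z \<in> S"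
    then obtain j where "j < card S" "z = sorted_list_of_set S ! j"
      using fin by (metis in_set_conv_nth length_sorted_list_of_set set_sorted_list_of_set)
    then show "z \<in> ?U"
      by (auto simp: chain_attrs_def)
  qed
  have "restrict (restrict (code_extend S f r) ?U) S = r" if "r \<in> R" for r
  proof -
    have "restrict (restrict (code_extend S f r) ?U) S = restrict (code_extend S f r) S"
      using \<open>S \<subseteq> ?U\<close> by (simp add: Int_absorb1)
    also have "\<dots> = restrict r S"
      by (rule restrict_ext) (simp add: code_extend_def)
    also have "\<dots> = r"
      using that rel by (auto simp: is_rel_def)
    finally show ?thesis .
  qed
  then show ?thesis
    by (simp add: bond_def bond_attrs_chain_factors[OF fin] join_chain_factors[OF fin ne inj]
        proj_def image_image)
qed

lemma ternarity_le_card_minus_2: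
  fixes f :: "(nat \<Rightarrow> 'd) \<Rightarrow> 'd"
  assumes rel: "is_rel S R" and two: "2 \<le> card S" and inj: "inj_on f R"
  shows "ternarity S R \<le> enat (card S - 2)"
proof -
  have fin: "finite S" and ne: "S \<noteq> {}"
    using rel two by (auto simp: is_rel_def)
  have "is_bond_of S R (chain_factors S f R)"
    by (simp add: is_bond_of_def bondable_chain_factors[OF fin] bond_attrs_chain_factors[OF fin]
        bond_chain_factors[OF rel ne inj])
  from ternarity_le[OF this subternaric_chain_factors[OF fin]] show ?thesis
    by (simp add: ternary_count_chain_factors[OF fin])
qed

section \<open>Injective codes on infinite domains\<close>

lemma inj_prod_if_infinite:
  assumes "infinite (UNIV :: 'd set)"
  obtains h :: "'d \<times> 'd \<Rightarrow> 'd" where "inj h"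
proof -
  have "(card_of ((UNIV :: 'd set) \<times> (UNIV :: 'd set)), card_of (UNIV :: 'd set)) \<in> ordIso"
    by (rule card_of_Times_same_infinite[OF assms])
  then have "(card_of ((UNIV :: 'd set) \<times> (UNIV :: 'd set)), card_of (UNIV :: 'd set)) \<in> ordLeq"
    by (rule ordIso_iff_ordLeq[THEN iffD1, THEN conjunct1])
  then obtain h :: "'d \<times> 'd \<Rightarrow> 'd" where "inj_on h (UNIV \<times> UNIV)"
    by (auto simp: card_of_ordLeq[symmetric])
  then show ?thesis
    using that by simp
qed

lemma inj_on_tuples_if_infinite:
  assumes inf: "infinite (UNIV :: 'd set)" and "finite S"
  shows "\<exists>g :: (nat \<Rightarrow> 'd) \<Rightarrow> 'd. inj_on g (tuples S)"
  using \<open>finite S\<close>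
proof (induction S rule: finite_induct)
  case empty
  have "tuples {} = {(\<lambda>_. undefined) :: nat \<Rightarrow> 'd}"
    by (auto simp: mem_tuples)
  then show ?case
    by auto
next
  case (insert x S)
  obtain g :: "(nat \<Rightarrow> 'd) \<Rightarrow> 'd" where g: "inj_on g (tuples S)"
    using insert.IH by blast
  obtain h :: "'d \<times> 'd \<Rightarrow> 'd" where h: "inj h"
    using inj_prod_if_infinite[OF inf] by blast
  have "inj_on (\<lambda>a. h (a x, g (restrict a S))) (tuples (insert x S))"
  proof (rule inj_onI)
    fix a b assume a: "a \<in> tuples (insert x S)" and b: "b \<in> tuples (insert x S)"
      and "h (a x, g (restrict a S)) = h (b x, g (restrict b S))"
    then have "a x = b x" "g (restrict a S) = g (restrict b S)"
      using h by (auto dest: injD)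
    then have "restrict a S = restrict b S"
      using g by (auto dest: inj_onD)
    show "a = b"
    proof
      fix z
      show "a z = b z"
        using \<open>a x = b x\<close> fun_cong[OF \<open>restrict a S = restrict b S\<close>, of z] a b
        by (cases "z \<in> S"; cases "z = x") (auto simp: mem_tuples)
    qed
  qed
  then show ?case
    by blast
qed

theorem theorem43:
  fixes S :: "nat set" and R :: "(nat \<Rightarrow> 'd) set"
  assumes rel: "is_rel S R"
    and nondeg: "\<not> degenerate S R"
    and n2: "card S \<ge> 2"
  shows "ternarity S R \<ge> enat (card S - 2)
    \<and> (card S = 3 \<longrightarrow> bond_irreducible S R)
    \<and> ((\<exists>f :: (nat \<Rightarrow> 'd) \<Rightarrow> 'd. inj_on f R) \<longrightarrow> ternarity S R = enat (card S - 2))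
    \<and> (infinite (UNIV :: 'd set) \<longrightarrow> ternarity S R = enat (card S - 2))"
proof -
  have lower: "enat (card S - 2) \<le> ternarity S R"
    by (rule card_minus_2_le_ternarity[OF n2 nondeg])
  have exact: "ternarity S R = enat (card S - 2)" if "inj_on f R" for f :: "(nat \<Rightarrow> 'd) \<Rightarrow> 'd"
    using lower ternarity_le_card_minus_2[OF rel n2 that] by simp
  have fin: "finite S" and tup: "R \<subseteq> tuples S"
    using rel by (auto simp: is_rel_def)
  have "\<exists>f :: (nat \<Rightarrow> 'd) \<Rightarrow> 'd. inj_on f R" if "infinite (UNIV :: 'd set)"
    using inj_on_tuples_if_infinite[OF that fin] inj_on_subset[OF _ tup] by blast
  then show ?thesis
    using lower bond_irreducible_if_ternary[OF _ nondeg] exact by blast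
qed

end
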